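(* Let $F$ be a field, $\omega$ a non-principal ultrafilter on $\mathbb{N}$ and $n_k\to\infty$. The group of invertible elements of the algebra $\prod_{k\to\omega}M_{n_k}(F)/\operatorname{Ker}\rho_\omega$ is isomorphic to $\prod_{k\to\omega}GL_{n_k}(F)/d_\omega$ (via the natural map induced by the inclusions $GL_{n_k}(F)\subseteq M_{n_k}(F)$).
   Context: For $a\in M_n(F)$, $\rho(a)=\operatorname{rk}(a)/n$. $\prod_{k\to\omega}M_{n_k}(F)/\operatorname{Ker}\rho_\omega$ is the quotient of $\prod_kM_{n_k}(F)$ by the ideal of sequences with $\lim_{k\to\omega}\rho(a_k)=0$. $\prod_{k\to\omega}GL_{n_k}(F)/d_\omega$ is the quotient of $\prod_kGL_{n_k}(F)$ by the normal subgroup $\{(a_k)_k:\lim_{k\to\omega}\rho(a_k-\mathrm{Id})=0\}$. *)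

theory Defs
  imports "Jordan_Normal_Form.DL_Rank" "HOL-Algebra.QuotRing" "HOL-Algebra.Coset"
begin

definition ultrafilter :: "nat filter \<Rightarrow> bool" where
  "ultrafilter U \<longleftrightarrow> U \<noteq> bot \<and> (\<forall>P. eventually P U \<or> eventually (\<lambda>x. \<not> P x) U)"

definition nonprincipal :: "nat filter \<Rightarrow> bool" where
  "nonprincipal U \<longleftrightarrow> (\<forall>m. \<not> eventually (\<lambda>x. x = m) U)"

definition rho :: "nat \<Rightarrow> 'a::field mat \<Rightarrow> real" where
  "rho m a = real (vec_space.rank m a) / real m"

definition mat_seq_ring :: "'a::field itself \<Rightarrow> (nat \<Rightarrow> nat) \<Rightarrow> (nat \<Rightarrow> 'a mat) ring" where
  "mat_seq_ring T n = \<lparr>carrier = {a. \<forall>k. a k \<in> carrier_mat (n k) (n k)},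
      mult = (\<lambda>a b k. a k * b k), one = (\<lambda>k. 1\<^sub>m (n k)),
      zero = (\<lambda>k. 0\<^sub>m (n k) (n k)), add = (\<lambda>a b k. a k + b k)\<rparr>"

definition ker_rho :: "'a::field itself \<Rightarrow> nat filter \<Rightarrow> (nat \<Rightarrow> nat) \<Rightarrow> (nat \<Rightarrow> 'a mat) set" where
  "ker_rho T U n = {a \<in> carrier (mat_seq_ring T n). ((\<lambda>k. rho (n k) (a k)) \<longlongrightarrow> 0) U}"

definition gl_seq_group :: "'a::field itself \<Rightarrow> (nat \<Rightarrow> nat) \<Rightarrow> (nat \<Rightarrow> 'a mat) monoid" where
  "gl_seq_group T n = \<lparr>carrier = {a. \<forall>k. a k \<in> carrier_mat (n k) (n k) \<and> invertible_mat (a k)},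
      mult = (\<lambda>a b k. a k * b k), one = (\<lambda>k. 1\<^sub>m (n k))\<rparr>"

definition d_kernel :: "'a::field itself \<Rightarrow> nat filter \<Rightarrow> (nat \<Rightarrow> nat) \<Rightarrow> (nat \<Rightarrow> 'a mat) set" where
  "d_kernel T U n = {g \<in> carrier (gl_seq_group T n).
      ((\<lambda>k. rho (n k) (g k - 1\<^sub>m (n k))) \<longlongrightarrow> 0) U}"

definition natural_map :: "'a::field itself \<Rightarrow> nat filter \<Rightarrow> (nat \<Rightarrow> nat)
    \<Rightarrow> (nat \<Rightarrow> 'a mat) set \<Rightarrow> (nat \<Rightarrow> 'a mat) set" where
  "natural_map T U n C = the_elem ((\<lambda>g. ker_rho T U n +>\<^bsub>mat_seq_ring T n\<^esub> g) ` C)"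

end

theory Submission
  imports Defs
begin

text \<open>Reduction modulo an ideal \<open>I\<close> maps units of \<open>R\<close> to units of \<open>R/I\<close>, with kernel
  \<open>{u. u - 1 \<in> I}\<close>; for the product of the matrix rings \<open>M(n\<^sub>k, F)\<close> and \<open>I = Ker \<rho>\<^sub>\<omega>\<close> this
  kernel is the \<open>d\<^sub>\<omega>\<close>-kernel, so everything rests on surjectivity. If \<open>a b \<equiv> 1\<close> modulo
  \<open>Ker \<rho>\<^sub>\<omega>\<close>, then \<open>rk a\<^sub>k \<ge> n\<^sub>k - rk (a\<^sub>k b\<^sub>k - 1)\<close>; and a matrix of rank \<open>r\<close> becomes
  invertible after adding \<open>n - r\<close> rank-one matrices. So each \<open>a\<^sub>k\<close> lies within normalized rank
  distance \<open>\<rho>(a\<^sub>k b\<^sub>k - 1)\<close> of an invertible matrix, and \<open>a\<close> is congruent to a unit.\<close>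

section \<open>Rank of matrices\<close>

context vec_space
begin

lemma col_space_subspace:
  assumes "A \<in> carrier_mat n nc"
  shows "subspace class_ring (col_space A) V"
  unfolding col_space_def using assms cols_dim[of A] by (intro span_is_subspace) auto

lemma col_space_subset_carrier:
  assumes "A \<in> carrier_mat n nc"
  shows "col_space A \<subseteq> carrier_vec n"
  using col_space_subspace[OF assms] unfolding subspace_def submodule_def by auto

lemma mult_mat_vec_in_col_space:
  assumes "A \<in> carrier_mat n nc" and "x \<in> carrier_vec nc"
  shows "A *\<^sub>v x \<in> col_space A"
  using assms unfolding col_space_eq[OF assms(1)] by auto

lemma col_space_elem:
  assumes "A \<in> carrier_mat n nc" and "y \<in> col_space A"
  obtains x where "x \<in> carrier_vec nc" "y = A *\<^sub>v x"
  using assms unfolding col_space_eq[OF assms(1)] by auto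

lemma col_space_basis_exists:
  assumes A: "A \<in> carrier_mat n nc"
  obtains S where "finite S" "S \<subseteq> col_space A" "lin_indpt S" "card S = rank A"
    "span S = col_space A"
proof -
  let ?W = "vs (col_space A)"
  have sub: "subspace class_ring (col_space A) V" by (rule col_space_subspace[OF A])
  then have submod: "submodule class_ring (col_space A) V" unfolding subspace_def by auto
  have vsW: "vectorspace class_ring ?W" using subspace_is_vs[OF sub] .
  have "vectorspace.fin_dim class_ring ?W"
    using fin_dim_span_cols[OF A] unfolding col_space_def .
  then obtain S where fin: "finite S" and basis: "vectorspace.basis class_ring ?W S"
    using vectorspace.finite_basis_exists[OF vsW] by blast
  then have S: "S \<subseteq> col_space A" and "\<not> module.lin_dep class_ring ?W S"
    and "LinearCombinations.module.span class_ring ?W S = col_space A"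
    unfolding vectorspace.basis_def[OF vsW] by auto
  with span_li_not_depend[OF S submod] have "lin_indpt S" "span S = col_space A" by simp_all
  moreover have "card S = rank A"
    using vectorspace.dim_basis[OF vsW fin basis] unfolding rank_def col_space_def by simp
  ultimately show ?thesis using that fin S by blast
qed

lemma card_le_rank_if_lin_indpt:
  assumes A: "A \<in> carrier_mat n nc" and S: "S \<subseteq> col_space A" and "lin_indpt S"
  shows "card S \<le> rank A"
proof -
  let ?W = "vs (col_space A)"
  have sub: "subspace class_ring (col_space A) V" by (rule col_space_subspace[OF A])
  then have submod: "submodule class_ring (col_space A) V" unfolding subspace_def by auto
  have "\<not> module.lin_dep class_ring ?W S"
    using span_li_not_depend(2)[OF S submod] \<open>lin_indpt S\<close> by simp
  from vectorspace.li_le_dim(2)[OF subspace_is_vs[OF sub] _ _ this] S fin_dim_span_cols[OF A]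
  show ?thesis unfolding rank_def col_space_def by auto
qed

lemma rank_le_rank_if_col_space_subset:
  assumes A: "A \<in> carrier_mat n nc" and B: "B \<in> carrier_mat n nc'"
    and "col_space A \<subseteq> col_space B"
  shows "rank A \<le> rank B"
proof -
  obtain S where "S \<subseteq> col_space A" "lin_indpt S" "card S = rank A"
    using col_space_basis_exists[OF A] by metis
  then show ?thesis using card_le_rank_if_lin_indpt[OF B, of S] assms(3) by auto
qed

lemma rank_mult_le_left:
  assumes A: "A \<in> carrier_mat n k" and B: "B \<in> carrier_mat k nc"
  shows "rank (A * B) \<le> rank A"
proof (rule rank_le_rank_if_col_space_subset[OF mult_carrier_mat[OF A B] A], rule subsetI)
  fix y assume "y \<in> col_space (A * B)"
  then obtain x where x: "x \<in> carrier_vec nc" and "y = (A * B) *\<^sub>v x"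
    using col_space_elem[OF mult_carrier_mat[OF A B]] by metis
  then have "y = A *\<^sub>v (B *\<^sub>v x)" using A B by (simp add: assoc_mult_mat_vec)
  then show "y \<in> col_space A" using mult_mat_vec_in_col_space[OF A] B x by simp
qed

text \<open>Pass to the matrix \<open>Bs\<close> whose columns are a basis of the column space of \<open>B\<close>:
  the column space of \<open>A * B\<close> lies in that of \<open>A * Bs\<close>, which has only \<open>rank B\<close> columns.\<close>
lemma rank_mult_le_right:
  assumes A: "A \<in> carrier_mat n n" and B: "B \<in> carrier_mat n nc"
  shows "rank (A * B) \<le> rank B"
proof -
  obtain S where "finite S" and S: "S \<subseteq> col_space B" "card S = rank B"
    and span_S: "span S = col_space B"
    using col_space_basis_exists[OF B] by metis
  then obtain ss where ss: "set ss = S" "distinct ss" using finite_distinct_list by blast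
  define Bs where "Bs = mat_of_cols n ss"
  have Bs: "Bs \<in> carrier_mat n (length ss)" unfolding Bs_def by auto
  have "cols Bs = ss"
    unfolding Bs_def using S(1) col_space_subset_carrier[OF B] ss by (intro cols_mat_of_cols) auto
  then have col_space_Bs: "col_space Bs = col_space B"
    by (simp only: col_space_def[of Bs] ss(1) span_S)
  have ABs: "A * Bs \<in> carrier_mat n (length ss)" using A Bs by auto
  have "col_space (A * B) \<subseteq> col_space (A * Bs)"
  proof
    fix y assume "y \<in> col_space (A * B)"
    then obtain x where x: "x \<in> carrier_vec nc" and y: "y = (A * B) *\<^sub>v x"
      using col_space_elem[OF mult_carrier_mat[OF A B]] by metis
    have "B *\<^sub>v x \<in> col_space Bs" using mult_mat_vec_in_col_space[OF B x] col_space_Bs by simp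
    then obtain c where c: "c \<in> carrier_vec (length ss)" and Bx: "B *\<^sub>v x = Bs *\<^sub>v c"
      using col_space_elem[OF Bs] by metis
    have "y = A *\<^sub>v (B *\<^sub>v x)" using y A B x by (simp add: assoc_mult_mat_vec)
    also have "\<dots> = (A * Bs) *\<^sub>v c" unfolding Bx using A Bs c by (simp add: assoc_mult_mat_vec)
    finally show "y \<in> col_space (A * Bs)" using mult_mat_vec_in_col_space[OF ABs c] by simp
  qed
  then have "rank (A * B) \<le> rank (A * Bs)"
    using rank_le_rank_if_col_space_subset[OF mult_carrier_mat[OF A B] ABs] by auto
  also have "\<dots> \<le> length ss" by (rule rank_le_nc[OF ABs])
  also have "\<dots> = rank B" using S(2) ss distinct_card by fastforce
  finally show ?thesis .
qed

lemma rank_uminus: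
  assumes A: "A \<in> carrier_mat n n"
  shows "rank (- A) = rank A"
proof -
  have "- A = A * (- 1\<^sub>m n)" "A = (- A) * (- 1\<^sub>m n)" using A by auto
  then show ?thesis
    using rank_mult_le_left[OF A, of "- 1\<^sub>m n" n] rank_mult_le_left[of "- A" n "- 1\<^sub>m n" n] A
    by (metis le_antisym uminus_carrier_mat one_carrier_mat)
qed

lemma rank_one_mat: "rank (1\<^sub>m n) = n"
  using det_rank_iff[of "1\<^sub>m n"] by simp

lemma rank_eq_if_col_space_full:
  assumes A: "A \<in> carrier_mat n n" and "col_space A = carrier_vec n"
  shows "rank A = n"
proof -
  let ?E = "set (unit_vecs n) :: 'a vec set"
  have li: "lin_indpt ?E" using unit_vecs_basis unfolding basis_def by blast
  have "?E \<subseteq> col_space A" unfolding assms(2) unit_vecs_def by auto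
  from card_le_rank_if_lin_indpt[OF A this li] have "card ?E \<le> rank A" .
  moreover have "card ?E = n" using distinct_card[OF unit_vecs_distinct] by simp
  ultimately show ?thesis using rank_le_nc[OF A] by simp
qed

lemma rank_less_if_col_space_extends:
  assumes A: "A \<in> carrier_mat n n" and B: "B \<in> carrier_mat n n"
    and sub: "col_space A \<subseteq> col_space B" and "u \<in> col_space B" "u \<notin> col_space A"
  shows "rank A < rank B"
proof -
  obtain S where "finite S" and S: "S \<subseteq> col_space A" "lin_indpt S" "card S = rank A"
    and span_S: "span S = col_space A" using col_space_basis_exists[OF A] by metis
  have S_carrier: "S \<subseteq> carrier_vec n" using S(1) col_space_subset_carrier[OF A] by auto
  have u: "u \<in> carrier_vec n" using assms(4) col_space_subset_carrier[OF B] by auto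
  have "u \<notin> S" using assms(5) S(1) by auto
  then have "lin_indpt (insert u S)"
    using lin_dep_iff_in_span[OF S_carrier S(2) u] assms(5) span_S by simp
  moreover have "insert u S \<subseteq> col_space B" using S(1) sub assms(4) by auto
  ultimately have "card (insert u S) \<le> rank B" using card_le_rank_if_lin_indpt[OF B] by blast
  then show ?thesis using \<open>finite S\<close> \<open>u \<notin> S\<close> S(3) by simp
qed

lemma rank_one_mat_exists:
  assumes u: "u \<in> carrier_vec n" and "i < n" "c \<noteq> 0"
  obtains E where "E \<in> carrier_mat n n" "rank E \<le> 1"
    "\<And>w. w \<in> carrier_vec n \<Longrightarrow> E *\<^sub>v w = (w $ i / c) \<cdot>\<^sub>v u"
proof
  define g where "g = (\<lambda>j. if j = i then inverse c else 0)"
  define E where "E = mat n n (\<lambda>(r, j). u $ r * g j)"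
  show E: "E \<in> carrier_mat n n" unfolding E_def by auto
  show "rank E \<le> 1"
    by (rule rank_le_1_product_entries[OF E, of "\<lambda>r. u $ r" g]) (auto simp: E_def)
  fix w :: "'a vec" assume w: "w \<in> carrier_vec n"
  show "E *\<^sub>v w = (w $ i / c) \<cdot>\<^sub>v u"
  proof (rule eq_vecI)
    fix r assume "r < dim_vec ((w $ i / c) \<cdot>\<^sub>v u)"
    then have r: "r < n" using u by simp
    have "(E *\<^sub>v w) $ r = (\<Sum>j\<in>{0..<n}. u $ r * g j * w $ j)"
      using r w unfolding E_def by (simp add: scalar_prod_def)
    also have "\<dots> = u $ r * inverse c * w $ i"
      using \<open>i < n\<close> by (simp add: g_def if_distrib if_distribR cong: if_cong)
    finally show "(E *\<^sub>v w) $ r = ((w $ i / c) \<cdot>\<^sub>v u) $ r" using r u by (simp add: field_simps)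
  qed (use E u in simp)
qed

text \<open>If \<open>A x = 0\<close> with \<open>x\<^sub>i \<noteq> 0\<close> and \<open>u \<notin> col_space A\<close>, the rank-one matrix
  \<open>E = u e\<^sub>i\<^sup>T / x\<^sub>i\<close> gives \<open>(A + E) x = u\<close>, while \<open>A + E\<close> agrees with \<open>A\<close> on the
  hyperplane \<open>w\<^sub>i = 0\<close>, which \<open>A\<close> maps onto its column space.\<close>
lemma rank_increase_by_rank_one:
  assumes A: "A \<in> carrier_mat n n" and "rank A < n"
  obtains E where "E \<in> carrier_mat n n" "rank E \<le> 1" "rank A < rank (A + E)"
proof -
  have "det A = 0" using det_rank_iff[OF A] \<open>rank A < n\<close> by simp
  then obtain x where x: "x \<in> carrier_vec n" "x \<noteq> 0\<^sub>v n" "A *\<^sub>v x = 0\<^sub>v n"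
    using det_0_iff_vec_prod_zero_field[OF A] by blast
  then obtain i where i: "i < n" "x $ i \<noteq> 0" by (metis eq_vecI carrier_vecD index_zero_vec)
  have "col_space A \<noteq> carrier_vec n" using rank_eq_if_col_space_full[OF A] \<open>rank A < n\<close> by auto
  then obtain u where u: "u \<in> carrier_vec n" "u \<notin> col_space A"
    using col_space_subset_carrier[OF A] by blast
  obtain E where E: "E \<in> carrier_mat n n" "rank E \<le> 1"
    and Ew: "\<And>w. w \<in> carrier_vec n \<Longrightarrow> E *\<^sub>v w = (w $ i / x $ i) \<cdot>\<^sub>v u"
    using rank_one_mat_exists[OF u(1) i] by metis
  have AE: "A + E \<in> carrier_mat n n" using A E by auto
  have AEw: "(A + E) *\<^sub>v w = A *\<^sub>v w + (w $ i / x $ i) \<cdot>\<^sub>v u" if "w \<in> carrier_vec n" for w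
    using add_mult_distrib_mat_vec[OF A E(1) that] Ew[OF that] by simp
  have "(A + E) *\<^sub>v x = u" unfolding AEw[OF x(1)] x(3) using i u by simp
  then have u_in: "u \<in> col_space (A + E)" using mult_mat_vec_in_col_space[OF AE x(1)] by simp
  have "col_space A \<subseteq> col_space (A + E)"
  proof
    fix y assume "y \<in> col_space A"
    then obtain v where v: "v \<in> carrier_vec n" and y: "y = A *\<^sub>v v"
      using col_space_elem[OF A] by metis
    define w where "w = v - (v $ i / x $ i) \<cdot>\<^sub>v x"
    have w: "w \<in> carrier_vec n" and "w $ i = 0" unfolding w_def using v x i by auto
    have "A *\<^sub>v w = A *\<^sub>v v - (v $ i / x $ i) \<cdot>\<^sub>v (A *\<^sub>v x)"
      unfolding w_def using A v x by (simp add: mult_minus_distrib_mat_vec mult_mat_vec)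
    then have "A *\<^sub>v w = y" using x(3) y A v by simp
    then have "(A + E) *\<^sub>v w = y" unfolding AEw[OF w] \<open>w $ i = 0\<close> using y A v u by simp
    then show "y \<in> col_space (A + E)" using mult_mat_vec_in_col_space[OF AE w] by simp
  qed
  then show ?thesis using that E rank_less_if_col_space_extends[OF A AE _ u_in u(2)] by blast
qed

lemma full_rank_mat_near:
  assumes "A \<in> carrier_mat n n"
  shows "\<exists>G \<in> carrier_mat n n. rank G = n \<and> rank (G - A) + rank A \<le> n"
  using assms
proof (induction "n - rank A" arbitrary: A rule: less_induct)
  case less
  note A = less.prems
  show ?case
  proof (cases "rank A < n")
    case False
    then have "rank A = n" using rank_le_nc[OF A] by simp
    then show ?thesis using A rank_0I[of n] by (intro bexI[of _ A]) (auto simp: minus_r_inv_mat)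
  next
    case True
    obtain E where E: "E \<in> carrier_mat n n" "rank E \<le> 1" "rank A < rank (A + E)"
      using rank_increase_by_rank_one[OF A True] by blast
    have AE: "A + E \<in> carrier_mat n n" using A E by auto
    have "n - rank (A + E) < n - rank A" using E(3) rank_le_nc[OF AE] by simp
    then obtain G where G: "G \<in> carrier_mat n n" "rank G = n" "rank (G - (A + E)) + rank (A + E) \<le> n"
      using less.hyps AE by blast
    have "G - A = (G - (A + E)) + E" using G(1) A E(1) by (auto intro!: eq_matI)
    moreover have "G - (A + E) \<in> carrier_mat n n" using minus_carrier_mat[OF AE] .
    ultimately have "rank (G - A) \<le> rank (G - (A + E)) + rank E"
      using rank_subadditive[OF _ E(1)] by metis
    then show ?thesis using G E by (intro bexI[of _ G]) auto
  qed
qed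

end

section \<open>Units of a quotient ring\<close>

context ideal
begin

lemma rcos_eq_iff:
  assumes x: "x \<in> carrier R" and y: "y \<in> carrier R"
  shows "I +> x = I +> y \<longleftrightarrow> x \<ominus> y \<in> I"
proof
  assume "I +> x = I +> y"
  then have "x \<in> I +> y" using a_rcos_self[OF x] by simp
  then show "x \<ominus> y \<in> I" using a_rcos_module_minus[OF ring_axioms y x] by simp
next
  assume "x \<ominus> y \<in> I"
  then have "x \<in> I +> y" using a_rcos_module_minus[OF ring_axioms y x] by simp
  then show "I +> x = I +> y" using a_repr_independence'[OF _ y] by simp
qed

lemma carrier_quotient_elem:
  assumes "X \<in> carrier (R Quot I)"
  obtains a where "a \<in> carrier R" "X = I +> a"
  using assms unfolding FactRing_def A_RCOSETS_def' by auto

lemma rcos_Units: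
  assumes "u \<in> Units R"
  shows "I +> u \<in> Units (R Quot I)"
proof -
  interpret Q: ring "R Quot I" by (rule quotient_is_ring)
  note hom = rcos_ring_hom
  obtain v where v: "v \<in> carrier R" "v \<otimes> u = \<one>" "u \<otimes> v = \<one>" and u: "u \<in> carrier R"
    using assms unfolding Units_def by blast
  have "(I +> v) \<otimes>\<^bsub>R Quot I\<^esub> (I +> u) = \<one>\<^bsub>R Quot I\<^esub>"
    "(I +> u) \<otimes>\<^bsub>R Quot I\<^esub> (I +> v) = \<one>\<^bsub>R Quot I\<^esub>"
    using ring_hom_mult[OF hom] ring_hom_one[OF hom] u v by metis+
  then show ?thesis
    unfolding Units_def using ring_hom_closed[OF hom] u v by blast
qed

lemma units_of_quotient_hom: "group_hom (units_of R) (units_of (R Quot I)) ((+>) I)"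
proof -
  interpret Q: ring "R Quot I" by (rule quotient_is_ring)
  have "(+>) I \<in> hom (units_of R) (units_of (R Quot I))"
    using rcos_Units ring_hom_mult[OF rcos_ring_hom]
    by (intro homI) (auto simp: units_of_def Units_def)
  then show ?thesis
    using units_group Q.units_group by (intro group_hom.intro group_hom_axioms.intro)
qed

lemma kernel_units_of_quotient:
  "kernel (units_of R) (units_of (R Quot I)) ((+>) I) = {u \<in> Units R. u \<ominus> \<one> \<in> I}"
proof -
  have "I +> \<one> = \<one>\<^bsub>R Quot I\<^esub>" using ring_hom_one[OF rcos_ring_hom] .
  then show ?thesis
    using rcos_eq_iff[OF _ one_closed] unfolding kernel_def units_of_def by auto
qed

lemma units_of_quotient_image:
  assumes lift: "\<And>a b. a \<in> carrier R \<Longrightarrow> b \<in> carrier R \<Longrightarrow> a \<otimes> b \<ominus> \<one> \<in> I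
    \<Longrightarrow> \<exists>u \<in> Units R. u \<ominus> a \<in> I"
  shows "(+>) I ` Units R = Units (R Quot I)"
proof
  show "(+>) I ` Units R \<subseteq> Units (R Quot I)" using rcos_Units by auto
next
  show "Units (R Quot I) \<subseteq> (+>) I ` Units R"
  proof
    fix X assume "X \<in> Units (R Quot I)"
    then obtain Y where X: "X \<in> carrier (R Quot I)" and Y: "Y \<in> carrier (R Quot I)"
      and XY: "X \<otimes>\<^bsub>R Quot I\<^esub> Y = \<one>\<^bsub>R Quot I\<^esub>" unfolding Units_def by blast
    obtain a where a: "a \<in> carrier R" "X = I +> a" using carrier_quotient_elem[OF X] .
    obtain b where b: "b \<in> carrier R" "Y = I +> b" using carrier_quotient_elem[OF Y] .
    have "I +> (a \<otimes> b) = I +> \<one>"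
      using XY a b ring_hom_mult[OF rcos_ring_hom] ring_hom_one[OF rcos_ring_hom] by simp
    then have "a \<otimes> b \<ominus> \<one> \<in> I" using rcos_eq_iff a b by simp
    then obtain u where u: "u \<in> Units R" "u \<ominus> a \<in> I" using lift a b by blast
    then have "I +> u = X" using rcos_eq_iff a by auto
    then show "X \<in> (+>) I ` Units R" using u by blast
  qed
qed

end

section \<open>Invertible matrices near a right-invertible one\<close>

lemma invertible_mat_iff:
  assumes A: "A \<in> carrier_mat m m"
  shows "invertible_mat A \<longleftrightarrow> (\<exists>B \<in> carrier_mat m m. A * B = 1\<^sub>m m \<and> B * A = 1\<^sub>m m)"
proof
  assume "invertible_mat A"
  then obtain B where AB: "A * B = 1\<^sub>m m" and BA: "B * A = 1\<^sub>m (dim_row B)"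
    using A unfolding invertible_mat_def inverts_mat_def by auto
  have "B \<in> carrier_mat m m"
    using arg_cong[OF AB, of dim_col] arg_cong[OF BA, of dim_col] A by auto
  then show "\<exists>B \<in> carrier_mat m m. A * B = 1\<^sub>m m \<and> B * A = 1\<^sub>m m" using AB BA by auto
qed (use A in \<open>auto simp: invertible_mat_def inverts_mat_def\<close>)

text \<open>From \<open>1 = a b - (a b - 1)\<close> and \<open>rank (a b) \<le> rank a\<close> we get
  \<open>m - rank a \<le> rank (a b - 1)\<close>, which bounds the distance to the full-rank matrix
  provided by \<open>full_rank_mat_near\<close>.\<close>
lemma invertible_mat_near_right_invertible:
  fixes a b :: "'a :: field mat"
  assumes a: "a \<in> carrier_mat m m" and b: "b \<in> carrier_mat m m"
  shows "\<exists>g \<in> carrier_mat m m. invertible_mat g \<and>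
    vec_space.rank m (g - a) \<le> vec_space.rank m (a * b - 1\<^sub>m m)"
proof -
  obtain g where g: "g \<in> carrier_mat m m" "vec_space.rank m g = m"
    "vec_space.rank m (g - a) + vec_space.rank m a \<le> m"
    using vec_space.full_rank_mat_near[OF a] by blast
  have "det g \<noteq> 0" using vec_space.det_rank_iff[OF g(1)] g(2) by simp
  then have "g \<in> Units (ring_mat TYPE('a) m ())" by (rule det_non_zero_imp_unit[OF g(1)])
  then have "invertible_mat g"
    unfolding invertible_mat_iff[OF g(1)] Units_def by (auto simp: ring_mat_def)
  have ab: "a * b \<in> carrier_mat m m" using a b by auto
  have ab1: "a * b - 1\<^sub>m m \<in> carrier_mat m m" by (rule minus_carrier_mat[OF one_carrier_mat])
  have "1\<^sub>m m = a * b + (- (a * b - 1\<^sub>m m))" using ab by (auto intro!: eq_matI)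
  then have "m \<le> vec_space.rank m (a * b) + vec_space.rank m (- (a * b - 1\<^sub>m m))"
    using vec_space.rank_subadditive[of "a * b" m m "- (a * b - 1\<^sub>m m)"] ab ab1
      vec_space.rank_one_mat[of m, where 'a = 'a] by auto
  also have "\<dots> \<le> vec_space.rank m a + vec_space.rank m (a * b - 1\<^sub>m m)"
    using vec_space.rank_mult_le_left[OF a b] vec_space.rank_uminus[OF ab1] by auto
  finally show ?thesis using g \<open>invertible_mat g\<close> by (intro bexI[of _ g]) auto
qed

section \<open>The ring of matrix sequences\<close>

lemma mat_seq_ring_simps [simp]:
  "carrier (mat_seq_ring T n) = {a. \<forall>k. a k \<in> carrier_mat (n k) (n k)}"
  "mult (mat_seq_ring T n) = (\<lambda>a b k. a k * b k)"
  "one (mat_seq_ring T n) = (\<lambda>k. 1\<^sub>m (n k))"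
  "zero (mat_seq_ring T n) = (\<lambda>k. 0\<^sub>m (n k) (n k))"
  "add (mat_seq_ring T n) = (\<lambda>a b k. a k + b k)"
  by (simp_all add: mat_seq_ring_def)

lemma ring_mat_seq_ring: "ring (mat_seq_ring (T :: 'a :: field itself) n)"
proof (rule ringI)
  show "abelian_group (mat_seq_ring T n)"
  proof (rule abelian_groupI)
    fix x assume "x \<in> carrier (mat_seq_ring T n)"
    then show "\<exists>y \<in> carrier (mat_seq_ring T n). y \<oplus>\<^bsub>mat_seq_ring T n\<^esub> x = \<zero>\<^bsub>mat_seq_ring T n\<^esub>"
      by (intro bexI[of _ "\<lambda>k. - x k"]) (auto simp: fun_eq_iff)
  qed (simp_all add: fun_eq_iff; metis assoc_add_mat comm_add_mat)+
  show "monoid (mat_seq_ring T n)"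
    by (rule monoidI) (simp_all add: fun_eq_iff;
      metis mult_carrier_mat assoc_mult_mat left_mult_one_mat right_mult_one_mat)+
qed (simp_all add: fun_eq_iff; metis add_mult_distrib_mat mult_add_distrib_mat)+

lemma a_inv_mat_seq_ring:
  assumes "x \<in> carrier (mat_seq_ring (T :: 'a :: field itself) n)"
  shows "\<ominus>\<^bsub>mat_seq_ring T n\<^esub> x = (\<lambda>k. - x k)"
proof -
  interpret ring "mat_seq_ring T n" by (rule ring_mat_seq_ring)
  show ?thesis by (rule minus_equality) (use assms in \<open>auto simp: fun_eq_iff\<close>)
qed

lemma a_minus_mat_seq_ring:
  assumes "x \<in> carrier (mat_seq_ring (T :: 'a :: field itself) n)"
    and "y \<in> carrier (mat_seq_ring T n)"
  shows "x \<ominus>\<^bsub>mat_seq_ring T n\<^esub> y = (\<lambda>k. x k - y k)"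
  using assms unfolding a_minus_def a_inv_mat_seq_ring[OF assms(2)] by (auto simp: fun_eq_iff)

lemma Units_mat_seq_ring:
  "Units (mat_seq_ring (T :: 'a :: field itself) n)
    = {a. \<forall>k. a k \<in> carrier_mat (n k) (n k) \<and> invertible_mat (a k)}"
proof safe
  fix a k assume "a \<in> Units (mat_seq_ring T n)"
  then obtain b where "a \<in> carrier (mat_seq_ring T n)" "b \<in> carrier (mat_seq_ring T n)"
    "b \<otimes>\<^bsub>mat_seq_ring T n\<^esub> a = \<one>\<^bsub>mat_seq_ring T n\<^esub>"
    "a \<otimes>\<^bsub>mat_seq_ring T n\<^esub> b = \<one>\<^bsub>mat_seq_ring T n\<^esub>"
    unfolding Units_def by blast
  then have "a k \<in> carrier_mat (n k) (n k)" "b k \<in> carrier_mat (n k) (n k)"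
    "a k * b k = 1\<^sub>m (n k)" "b k * a k = 1\<^sub>m (n k)"
    by (simp_all add: fun_eq_iff)
  then show "a k \<in> carrier_mat (n k) (n k)" "invertible_mat (a k)"
    using invertible_mat_iff[of "a k" "n k"] by auto
next
  fix a :: "nat \<Rightarrow> 'a mat" assume a: "\<forall>k. a k \<in> carrier_mat (n k) (n k) \<and> invertible_mat (a k)"
  then have "\<forall>k. \<exists>B \<in> carrier_mat (n k) (n k). a k * B = 1\<^sub>m (n k) \<and> B * a k = 1\<^sub>m (n k)"
    using invertible_mat_iff by blast
  then obtain b where b: "\<And>k. b k \<in> carrier_mat (n k) (n k)"
    "\<And>k. a k * b k = 1\<^sub>m (n k)" "\<And>k. b k * a k = 1\<^sub>m (n k)"
    by metis
  have "b \<otimes>\<^bsub>mat_seq_ring T n\<^esub> a = \<one>\<^bsub>mat_seq_ring T n\<^esub>"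
    "a \<otimes>\<^bsub>mat_seq_ring T n\<^esub> b = \<one>\<^bsub>mat_seq_ring T n\<^esub>"
    using b by simp_all
  then show "a \<in> Units (mat_seq_ring T n)" unfolding Units_def using a b(1) by auto
qed

lemma gl_seq_group_eq_units_of: "gl_seq_group T n = units_of (mat_seq_ring (T :: 'a :: field itself) n)"
  unfolding gl_seq_group_def units_of_def Units_mat_seq_ring by simp

lemma rho_nonneg: "0 \<le> rho m A"
  unfolding rho_def by simp

lemma rho_mono:
  "vec_space.rank m (A :: 'a :: field mat) \<le> vec_space.rank m (B :: 'a mat) \<Longrightarrow> rho m A \<le> rho m B"
  unfolding rho_def by (intro divide_right_mono) auto

lemma rho_add_le:
  fixes A B :: "'a :: field mat"
  assumes "A \<in> carrier_mat m m" "B \<in> carrier_mat m m"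
  shows "rho m (A + B) \<le> rho m A + rho m B"
  using vec_space.rank_subadditive[OF assms]
  unfolding rho_def add_divide_distrib[symmetric] by (intro divide_right_mono) auto

lemma rho_uminus: "A \<in> carrier_mat m m \<Longrightarrow> rho m (- A) = rho m (A :: 'a :: field mat)"
  unfolding rho_def by (simp add: vec_space.rank_uminus)

lemma rho_zero: "rho m (0\<^sub>m m m :: 'a :: field mat) = 0"
  unfolding rho_def vec_space.rank_0I by simp

lemma tendsto_zero_squeeze:
  fixes f g :: "'b \<Rightarrow> real"
  assumes "\<And>k. 0 \<le> f k" "\<And>k. f k \<le> g k" "(g \<longlongrightarrow> 0) F"
  shows "(f \<longlongrightarrow> 0) F"
  by (rule tendsto_sandwich[of "\<lambda>_. 0" f F g]) (use assms in auto)

lemma mem_ker_rho_iff: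
  "a \<in> ker_rho T U n \<longleftrightarrow>
    (\<forall>k. a k \<in> carrier_mat (n k) (n k)) \<and> ((\<lambda>k. rho (n k) (a k)) \<longlongrightarrow> 0) U"
  by (simp add: ker_rho_def)

lemma ideal_ker_rho: "ideal (ker_rho (T :: 'a :: field itself) U n) (mat_seq_ring T n)"
proof (rule idealI[OF ring_mat_seq_ring])
  let ?R = "mat_seq_ring T n" and ?I = "ker_rho T U n"
  show "subgroup ?I (add_monoid ?R)"
  proof
    fix x y assume "x \<in> ?I" "y \<in> ?I"
    then have x: "\<And>k. x k \<in> carrier_mat (n k) (n k)" "((\<lambda>k. rho (n k) (x k)) \<longlongrightarrow> 0) U"
      and y: "\<And>k. y k \<in> carrier_mat (n k) (n k)" "((\<lambda>k. rho (n k) (y k)) \<longlongrightarrow> 0) U"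
      unfolding mem_ker_rho_iff by auto
    have "((\<lambda>k. rho (n k) (x k + y k)) \<longlongrightarrow> 0) U"
      by (rule tendsto_zero_squeeze[OF rho_nonneg rho_add_le[OF x(1) y(1)] tendsto_add_zero[OF x(2) y(2)]])
    then show "x \<otimes>\<^bsub>add_monoid ?R\<^esub> y \<in> ?I" using x(1) y(1) unfolding mem_ker_rho_iff by simp
  next
    fix x assume x: "x \<in> ?I"
    then have "inv\<^bsub>add_monoid ?R\<^esub> x = (\<lambda>k. - x k)"
      using a_inv_mat_seq_ring[of x T n] unfolding mem_ker_rho_iff a_inv_def by simp
    then show "inv\<^bsub>add_monoid ?R\<^esub> x \<in> ?I" using x unfolding mem_ker_rho_iff by (simp add: rho_uminus)
  qed (auto simp: mem_ker_rho_iff rho_zero)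
next
  fix a x assume "a \<in> ker_rho T U n" and x: "x \<in> carrier (mat_seq_ring T n)"
  then have a: "\<And>k. a k \<in> carrier_mat (n k) (n k)" "((\<lambda>k. rho (n k) (a k)) \<longlongrightarrow> 0) U"
    and x: "\<And>k. x k \<in> carrier_mat (n k) (n k)"
    unfolding mem_ker_rho_iff by auto
  have "((\<lambda>k. rho (n k) (x k * a k)) \<longlongrightarrow> 0) U"
    using vec_space.rank_mult_le_right[OF x a(1)]
    by (intro tendsto_zero_squeeze[OF rho_nonneg rho_mono a(2)])
  then show "x \<otimes>\<^bsub>mat_seq_ring T n\<^esub> a \<in> ker_rho T U n"
    using mult_carrier_mat[OF x a(1)] unfolding mem_ker_rho_iff by simp
  have "((\<lambda>k. rho (n k) (a k * x k)) \<longlongrightarrow> 0) U"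
    using vec_space.rank_mult_le_left[OF a(1) x]
    by (intro tendsto_zero_squeeze[OF rho_nonneg rho_mono a(2)])
  then show "a \<otimes>\<^bsub>mat_seq_ring T n\<^esub> x \<in> ker_rho T U n"
    using mult_carrier_mat[OF a(1) x] unfolding mem_ker_rho_iff by simp
qed

lemma ker_rho_lift_units:
  fixes T :: "'a :: field itself"
  assumes a: "a \<in> carrier (mat_seq_ring T n)" and b: "b \<in> carrier (mat_seq_ring T n)"
    and ab: "a \<otimes>\<^bsub>mat_seq_ring T n\<^esub> b \<ominus>\<^bsub>mat_seq_ring T n\<^esub> \<one>\<^bsub>mat_seq_ring T n\<^esub> \<in> ker_rho T U n"
  shows "\<exists>u \<in> Units (mat_seq_ring T n). u \<ominus>\<^bsub>mat_seq_ring T n\<^esub> a \<in> ker_rho T U n"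
proof -
  interpret ring "mat_seq_ring T n" by (rule ring_mat_seq_ring)
  have "\<exists>g \<in> carrier_mat (n k) (n k). invertible_mat g \<and>
      vec_space.rank (n k) (g - a k) \<le> vec_space.rank (n k) (a k * b k - 1\<^sub>m (n k))" for k
    using a b by (intro invertible_mat_near_right_invertible) simp_all
  then obtain g where g: "\<And>k. g k \<in> carrier_mat (n k) (n k)" "\<And>k. invertible_mat (g k)"
    and rank_g: "\<And>k. vec_space.rank (n k) (g k - a k) \<le> vec_space.rank (n k) (a k * b k - 1\<^sub>m (n k))"
    by metis
  have g_unit: "g \<in> Units (mat_seq_ring T n)" unfolding Units_mat_seq_ring using g by simp
  have "((\<lambda>k. rho (n k) (a k * b k - 1\<^sub>m (n k))) \<longlongrightarrow> 0) U"
    using ab a_minus_mat_seq_ring[OF m_closed[OF a b] one_closed] unfolding mem_ker_rho_iff by simp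
  then have "((\<lambda>k. rho (n k) (g k - a k)) \<longlongrightarrow> 0) U"
    by (rule tendsto_zero_squeeze[OF rho_nonneg rho_mono[OF rank_g]])
  moreover have "g \<ominus>\<^bsub>mat_seq_ring T n\<^esub> a = (\<lambda>k. g k - a k)"
    using a_minus_mat_seq_ring[OF Units_closed[OF g_unit] a] .
  ultimately show ?thesis
    using g_unit a unfolding mem_ker_rho_iff by (intro bexI[of _ g]) (simp_all add: minus_carrier_mat)
qed

lemma d_kernel_eq:
  "d_kernel T U n = {u \<in> Units (mat_seq_ring (T :: 'a :: field itself) n).
    u \<ominus>\<^bsub>mat_seq_ring T n\<^esub> \<one>\<^bsub>mat_seq_ring T n\<^esub> \<in> ker_rho T U n}"
  unfolding d_kernel_def ker_rho_def gl_seq_group_eq_units_of units_of_carrier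
  by (auto simp: a_minus_mat_seq_ring Units_mat_seq_ring)

theorem mainTheorem6:
  fixes T :: "'a::field itself" and U :: "nat filter" and n :: "nat \<Rightarrow> nat"
  assumes "ultrafilter U" and "nonprincipal U"
    and "filterlim n at_top sequentially"
  shows "ideal (ker_rho T U n) (mat_seq_ring T n)
    \<and> d_kernel T U n \<lhd> gl_seq_group T n
    \<and> natural_map T U n \<in> iso (gl_seq_group T n Mod d_kernel T U n)
          (units_of (mat_seq_ring T n Quot ker_rho T U n))"
proof -
  let ?R = "mat_seq_ring T n" and ?I = "ker_rho T U n"
  interpret ideal ?I ?R by (rule ideal_ker_rho)
  have hom: "group_hom (gl_seq_group T n) (units_of (?R Quot ?I)) ((+>\<^bsub>?R\<^esub>) ?I)"
    unfolding gl_seq_group_eq_units_of by (rule units_of_quotient_hom)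
  have kernel: "kernel (gl_seq_group T n) (units_of (?R Quot ?I)) ((+>\<^bsub>?R\<^esub>) ?I) = d_kernel T U n"
    unfolding gl_seq_group_eq_units_of kernel_units_of_quotient d_kernel_eq ..
  have "(+>\<^bsub>?R\<^esub>) ?I ` carrier (gl_seq_group T n) = carrier (units_of (?R Quot ?I))"
    unfolding gl_seq_group_eq_units_of units_of_carrier
    using units_of_quotient_image ker_rho_lift_units by blast
  from group_hom.FactGroup_iso_set[OF hom this]
  have "natural_map T U n \<in> iso (gl_seq_group T n Mod d_kernel T U n) (units_of (?R Quot ?I))"
    unfolding kernel natural_map_def .
  then show ?thesis using ideal_ker_rho group_hom.normal_kernel[OF hom] unfolding kernel by blast
qed

end
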